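(* Let $\mathcal F$ be the class of all functions $\mathbb R^p\to\mathbb R^d$ representable by binary trees of depth at most $D$ in which every internal node queries "$x_k\le\theta$?" for some coordinate $k$ and some threshold $\theta\in\{1/\ell,\dots,1-1/\ell\}$ (going left if true, right otherwise), and every leaf assigns an arbitrary output $v\in\mathbb R^d$. Suppose $f^*\in\mathcal F$, $X\in[0,1]^p$, and $X$ has a density bounded below by $\mu_{\min}>0$ on $[0,1]^p$. Then there exists $\kappa$ such that for all $f\in\mathcal F$ and almost all $x$, $$\|f(x)-f^*(x)\|^2\le\kappa\,\mathbb E_X\|f(X)-f^*(X)\|^2.$$
   Context: $X\in\mathbb R^p$ is a random vector, $Y\in\mathbb R^d$ with $\|Y\|\le1$, and $f^*(x)=\mathbb E[Y\mid X=x]$; $\mathbb E_X$ is expectation over $X$; $\ell\ge2$ and $D\ge1$ are fixed integers. *)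

theory Defs
  imports "HOL-Probability.Probability"
begin

datatype ('p, 'v) dtree = Leaf 'v | Node 'p real "('p, 'v) dtree" "('p, 'v) dtree"

fun eval_tree :: "('p, 'v) dtree \<Rightarrow> real ^ 'p \<Rightarrow> 'v" where
  "eval_tree (Leaf v) x = v"
| "eval_tree (Node k \<theta> l r) x = (if x $ k \<le> \<theta> then eval_tree l x else eval_tree r x)"

fun depth :: "('p, 'v) dtree \<Rightarrow> nat" where
  "depth (Leaf v) = 0"
| "depth (Node k \<theta> l r) = Suc (max (depth l) (depth r))"

fun thresholds :: "('p, 'v) dtree \<Rightarrow> real set" where
  "thresholds (Leaf v) = {}"
| "thresholds (Node k \<theta> l r) = insert \<theta> (thresholds l \<union> thresholds r)"

definition grid :: "nat \<Rightarrow> real set" where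
  "grid l = {real j / real l | j. 1 \<le> j \<and> j \<le> l - 1}"

definition tree_class :: "nat \<Rightarrow> nat \<Rightarrow> (real ^ 'p \<Rightarrow> real ^ 'd) set" where
  "tree_class l D = {eval_tree t | t :: ('p, real ^ 'd) dtree.
                       depth t \<le> D \<and> thresholds t \<subseteq> grid l}"

end

theory Submission
  imports Defs
begin

text \<open>Every point x of the unit cube has a grid cell of side 1/l (an open box of volume
  l^-p) all of whose points compare with every grid threshold exactly as x does, so both
  trees are constant on it and so is h = |f - f*|^2. Since the density of X is at least
  \<mu>min there, the cell carries probability at least \<mu>min l^-p, and Markov's inequality
  gives h x \<le> l^p / \<mu>min * E h(X) for every x in the cube, which is where X lives.\<close>

lemma measurable_eval_tree [measurable]:
  "eval_tree (t :: ('p::finite, 'v::topological_space) dtree) \<in> borel_measurable borel"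
proof (induction t)
  case (Leaf v)
  then show ?case by simp
next
  case (Node k \<theta> l r)
  have "{x \<in> space (borel :: (real^'p) measure). x $ k \<le> \<theta>} \<in> sets borel"
    by measurable
  with Node show ?case by (simp add: measurable_If)
qed

lemma bounded_eval_tree:
  "bounded (range (eval_tree (t :: ('p::finite, 'v::real_normed_vector) dtree)))"
proof (induction t)
  case (Leaf v)
  then show ?case by simp
next
  case (Node k \<theta> l r)
  have "range (eval_tree (Node k \<theta> l r)) \<subseteq> range (eval_tree l) \<union> range (eval_tree r)"
    by auto
  with Node show ?case by (meson bounded_Un bounded_subset)
qed

lemma integrable_norm_diff_eval_tree_sq:
  fixes t s :: "('p::finite, 'v::{real_normed_vector, second_countable_topology}) dtree"
  assumes "finite_measure M" and "X \<in> borel_measurable M"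
  shows "integrable M (\<lambda>\<omega>. (norm (eval_tree t (X \<omega>) - eval_tree s (X \<omega>)))\<^sup>2)"
proof -
  obtain B1 B2 where "\<And>x. norm (eval_tree t x) \<le> B1" "\<And>x. norm (eval_tree s x) \<le> B2"
    using bounded_eval_tree[of t] bounded_eval_tree[of s] by (auto simp: bounded_iff)
  then have "norm (eval_tree t x - eval_tree s x) \<le> B1 + B2" for x
    by (smt (verit) norm_triangle_ineq4)
  then have "\<bar>(norm (eval_tree t x - eval_tree s x))\<^sup>2\<bar> \<le> (B1 + B2)\<^sup>2" for x
    by (simp add: power_mono)
  with assms show ?thesis
    by (intro finite_measure.integrable_const_bound[where B = "(B1 + B2)\<^sup>2"]) auto
qed

definition threshold_equiv :: "real set \<Rightarrow> real ^ 'p \<Rightarrow> real ^ 'p \<Rightarrow> bool" where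
  "threshold_equiv S x y \<longleftrightarrow> (\<forall>k. \<forall>\<theta>\<in>S. x $ k \<le> \<theta> \<longleftrightarrow> y $ k \<le> \<theta>)"

lemma eval_tree_eq_if_threshold_equiv:
  assumes "thresholds t \<subseteq> S" and "threshold_equiv S x y"
  shows "eval_tree t x = eval_tree t y"
  using assms by (induction t) (auto simp: threshold_equiv_def)

definition grid_cell :: "nat \<Rightarrow> ('p \<Rightarrow> nat) \<Rightarrow> (real ^ 'p) set" where
  "grid_cell l J = box (\<chi> k. real (J k) / real l) (\<chi> k. real (J k + 1) / real l)"

lemma grid_cell_subset_unit_cube:
  assumes "\<And>k. J k < l"
  shows "grid_cell l J \<subseteq> cbox 0 1"
proof
  fix y assume y: "y \<in> grid_cell l J"
  have "0 \<le> y $ k \<and> y $ k \<le> 1" for k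
  proof -
    have "real (J k) / real l < y $ k" "y $ k < real (J k + 1) / real l"
      using y by (auto simp: grid_cell_def mem_box_cart)
    moreover have "real (J k + 1) / real l \<le> 1"
      using assms[of k] by (simp add: field_simps)
    ultimately show ?thesis by (smt (verit) divide_nonneg_nonneg of_nat_0_le_iff)
  qed
  then show "y \<in> cbox 0 1" by (simp add: mem_box_cart)
qed

lemma emeasure_grid_cell:
  assumes "l > 0"
  shows "emeasure lborel (grid_cell l J :: (real ^ 'p::finite) set) = ennreal ((1 / real l) ^ CARD('p))"
proof -
  define a b :: "real ^ 'p" where "a = (\<chi> k. real (J k) / real l)" and "b = (\<chi> k. real (J k + 1) / real l)"
  have "\<And>e. e \<in> Basis \<Longrightarrow> a \<bullet> e \<le> b \<bullet> e"
    unfolding a_def b_def by (auto simp: Basis_vec_def inner_axis divide_right_mono)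
  then have "emeasure lborel (grid_cell l J) = ennreal (\<Prod>e\<in>Basis. (b - a) \<bullet> e)"
    unfolding grid_cell_def a_def b_def by simp
  also have "(\<Prod>e\<in>Basis. (b - a) \<bullet> e) = (\<Prod>e\<in>(Basis :: (real ^ 'p) set). 1 / real l)"
    by (rule prod.cong) (auto simp: Basis_vec_def inner_axis a_def b_def diff_divide_distrib[symmetric])
  finally show ?thesis by simp
qed

lemma grid_interval_threshold_equiv:
  fixes r :: real
  assumes "0 \<le> r" "r \<le> 1" "l \<ge> 1"
  obtains j :: nat where "j < l"
    and "\<And>s \<theta>. real j / real l < s \<Longrightarrow> s < real (j + 1) / real l \<Longrightarrow> \<theta> \<in> grid l
           \<Longrightarrow> r \<le> \<theta> \<longleftrightarrow> s \<le> \<theta>"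
proof
  define c where "c = \<lceil>real l * r\<rceil>"
  define j where "j = nat (max 1 c) - 1"
  have "c \<le> int l"
    using assms unfolding c_def by (metis ceiling_mono ceiling_of_nat mult_left_le of_nat_0_le_iff)
  then show "j < l"
    using assms unfolding j_def by linarith
  fix s \<theta>
  assume s: "real j / real l < s" "s < real (j + 1) / real l" and "\<theta> \<in> grid l"
  then obtain i :: nat where i: "1 \<le> i" "\<theta> = real i / real l"
    unfolding grid_def by auto
  \<comment> \<open>\<open>max 1\<close> puts r = 0 into the first cell; harmless, as grid thresholds have \<open>i \<ge> 1\<close>.\<close>
  have "r \<le> \<theta> \<longleftrightarrow> real l * r \<le> real i"
    using assms(3) i(2) by (simp add: pos_le_divide_eq mult.commute)
  also have "\<dots> \<longleftrightarrow> c \<le> int i"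
    unfolding c_def by (metis ceiling_le_iff of_int_of_nat_eq)
  also have "\<dots> \<longleftrightarrow> j + 1 \<le> i"
    using i(1) unfolding j_def by linarith
  also have "\<dots> \<longleftrightarrow> s \<le> \<theta>"
  proof
    assume "j + 1 \<le> i"
    then have "real (j + 1) / real l \<le> real i / real l"
      by (simp add: divide_right_mono)
    then show "s \<le> \<theta>" using s i by simp
  next
    assume "s \<le> \<theta>"
    then have "real j / real l < real i / real l" using s i by simp
    then show "j + 1 \<le> i" by (auto simp: divide_less_cancel)
  qed
  finally show "r \<le> \<theta> \<longleftrightarrow> s \<le> \<theta>" .
qed

lemma unit_cube_grid_cell_threshold_equiv:
  fixes x :: "real ^ 'p"
  assumes "x \<in> cbox 0 1" and "l \<ge> 1"
  obtains J where "\<And>k. J k < l" and "\<And>y. y \<in> grid_cell l J \<Longrightarrow> threshold_equiv (grid l) x y"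
proof -
  have "\<forall>k. \<exists>j. j < l \<and> (\<forall>s \<theta>. real j / real l < s \<longrightarrow> s < real (j + 1) / real l
                             \<longrightarrow> \<theta> \<in> grid l \<longrightarrow> (x $ k \<le> \<theta> \<longleftrightarrow> s \<le> \<theta>))"
  proof
    fix k
    have "0 \<le> x $ k" "x $ k \<le> 1"
      using assms(1) by (auto simp: mem_box_cart)
    then show "\<exists>j. j < l \<and> (\<forall>s \<theta>. real j / real l < s \<longrightarrow> s < real (j + 1) / real l
                             \<longrightarrow> \<theta> \<in> grid l \<longrightarrow> (x $ k \<le> \<theta> \<longleftrightarrow> s \<le> \<theta>))"
      using assms(2) by (metis grid_interval_threshold_equiv)
  qed
  then obtain J where J: "\<And>k. J k < l"
    and coord: "\<And>k s \<theta>. real (J k) / real l < s \<Longrightarrow> s < real (J k + 1) / real l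
                 \<Longrightarrow> \<theta> \<in> grid l \<Longrightarrow> (x $ k \<le> \<theta> \<longleftrightarrow> s \<le> \<theta>)"
    by metis
  show ?thesis
  proof (rule that[OF J])
    fix y assume "y \<in> grid_cell l J"
    then have "real (J k) / real l < y $ k" "y $ k < real (J k + 1) / real l" for k
      by (auto simp: grid_cell_def mem_box_cart)
    with coord show "threshold_equiv (grid l) x y"
      unfolding threshold_equiv_def by blast
  qed
qed

lemma (in finite_measure) markov_on_set:
  assumes "X \<in> borel_measurable M" and "B \<in> sets borel"
    and "integrable M (\<lambda>\<omega>. h (X \<omega>))" and "\<And>y. 0 \<le> h y" and "\<And>y. y \<in> B \<Longrightarrow> c \<le> h y"
    and "0 \<le> c"
  shows "c * measure M (X -` B \<inter> space M) \<le> (\<integral>\<omega>. h (X \<omega>) \<partial>M)"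
proof -
  have "c * measure M (X -` B \<inter> space M) = (\<integral>\<omega>. c * indicator (X -` B \<inter> space M) \<omega> \<partial>M)"
    by simp
  also have "\<dots> \<le> (\<integral>\<omega>. h (X \<omega>) \<partial>M)"
    using assms by (intro integral_mono integrable_mult_right integrable_real_indicator)
      (auto simp: less_top[symmetric] emeasure_finite split: split_indicator)
  finally show ?thesis .
qed

lemma emeasure_ge_density_lower_bound:
  assumes "distributed M lborel X g" and "B \<in> sets borel" and "\<And>y. y \<in> B \<Longrightarrow> c \<le> g y"
  shows "c * emeasure lborel B \<le> emeasure M (X -` B \<inter> space M)"
proof -
  have "c * emeasure lborel B = (\<integral>\<^sup>+ y. c * indicator B y \<partial>lborel)"
    using assms(2) by (simp add: nn_integral_cmult_indicator)
  also have "\<dots> \<le> (\<integral>\<^sup>+ y. g y * indicator B y \<partial>lborel)"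
    using assms(3) by (intro nn_integral_mono) (auto split: split_indicator)
  also have "\<dots> = emeasure (distr M lborel X) B"
    using assms distributed_borel_measurable[OF assms(1)]
    by (simp add: distributed_distr_eq_density emeasure_density)
  also have "\<dots> = emeasure M (X -` B \<inter> space M)"
    using assms distributed_measurable[OF assms(1)] by (simp add: emeasure_distr)
  finally show ?thesis .
qed

lemma (in prob_space) grid_invariant_le_expectation:
  fixes X :: "'a \<Rightarrow> real ^ 'p::finite" and h :: "real ^ 'p \<Rightarrow> real"
  assumes "distributed M lborel X g" and "\<mu>min > 0" and "\<And>x. x \<in> cbox 0 1 \<Longrightarrow> \<mu>min \<le> g x"
    and "l \<ge> 1" and "integrable M (\<lambda>\<omega>. h (X \<omega>))" and "\<And>y. 0 \<le> h y"
    and "\<And>x y. threshold_equiv (grid l) x y \<Longrightarrow> h x = h y"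
    and "x \<in> cbox 0 1"
  shows "h x \<le> real l ^ CARD('p) / \<mu>min * (\<integral>\<omega>. h (X \<omega>) \<partial>M)"
proof -
  obtain J where J: "\<And>k. J k < l" and equiv: "\<And>y. y \<in> grid_cell l J \<Longrightarrow> threshold_equiv (grid l) x y"
    using unit_cube_grid_cell_threshold_equiv[OF assms(8,4)] by blast
  let ?B = "grid_cell l J :: (real ^ 'p) set"
  have "ennreal \<mu>min * emeasure lborel ?B \<le> emeasure M (X -` ?B \<inter> space M)"
    using grid_cell_subset_unit_cube[of J, OF J] assms(3)
    by (intro emeasure_ge_density_lower_bound[OF assms(1)]) (auto simp: grid_cell_def)
  then have "ennreal (\<mu>min * (1 / real l) ^ CARD('p)) \<le> emeasure M (X -` ?B \<inter> space M)"
    using emeasure_grid_cell[of l J] assms(2,4) by (simp add: ennreal_mult)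
  then have prob: "\<mu>min * (1 / real l) ^ CARD('p) \<le> prob (X -` ?B \<inter> space M)"
    by (simp add: emeasure_eq_measure ennreal_le_iff)
  have X: "X \<in> borel_measurable M"
    using distributed_measurable[OF assms(1)] by simp
  have h_on_cell: "h x \<le> h y" if "y \<in> ?B" for y
    using equiv[OF that] assms(7) by simp
  have "h x * (\<mu>min * (1 / real l) ^ CARD('p)) \<le> h x * prob (X -` ?B \<inter> space M)"
    using prob assms(6) by (rule mult_left_mono)
  also have "\<dots> \<le> (\<integral>\<omega>. h (X \<omega>) \<partial>M)"
    using markov_on_set[OF X _ assms(5,6) h_on_cell] assms(6)
    by (simp add: grid_cell_def)
  finally show ?thesis
    using assms(2,4) by (simp add: field_simps power_divide)
qed

theorem proposition2:
  fixes M :: "'a measure"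
    and X :: "'a \<Rightarrow> real ^ 'p"
    and Y :: "'a \<Rightarrow> real ^ 'd"
    and fstar :: "real ^ 'p \<Rightarrow> real ^ 'd"
    and g :: "real ^ 'p \<Rightarrow> ennreal"
    and l D :: nat
    and \<mu>min :: real
  assumes "prob_space M"
    and "l \<ge> 2" and "D \<ge> 1"
    and "X \<in> borel_measurable M" and "Y \<in> borel_measurable M"
    and "\<forall>\<omega>\<in>space M. norm (Y \<omega>) \<le> 1"
    and "\<forall>i. AE \<omega> in M. fstar (X \<omega>) $ i
             = real_cond_exp M (vimage_algebra (space M) X borel) (\<lambda>\<omega>. Y \<omega> $ i) \<omega>"
    and "fstar \<in> tree_class l D"
    and "\<forall>\<omega>\<in>space M. X \<omega> \<in> cbox 0 1"
    and "distributed M lborel X g"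
    and "\<mu>min > 0"
    and "\<forall>x\<in>cbox 0 1. g x \<ge> ennreal \<mu>min"
  shows "\<exists>\<kappa>::real. \<forall>f\<in>tree_class l D.
           AE x in distr M borel X.
             (norm (f x - fstar x))\<^sup>2
               \<le> \<kappa> * (\<integral>\<omega>. (norm (f (X \<omega>) - fstar (X \<omega>)))\<^sup>2 \<partial>M)"
proof (intro exI ballI)
  interpret prob_space M by fact
  fix f :: "real ^ 'p \<Rightarrow> real ^ 'd"
  assume "f \<in> tree_class l D"
  then obtain t where t: "f = eval_tree t" "thresholds t \<subseteq> grid l"
    unfolding tree_class_def by auto
  obtain s where s: "fstar = eval_tree s" "thresholds s \<subseteq> grid l"
    using assms(8) unfolding tree_class_def by auto
  have "AE x in distr M borel X. x \<in> cbox 0 1"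
    using assms(4,9) by (subst AE_distr_iff) auto
  then show "AE x in distr M borel X. (norm (f x - fstar x))\<^sup>2
               \<le> real l ^ CARD('p) / \<mu>min * (\<integral>\<omega>. (norm (f (X \<omega>) - fstar (X \<omega>)))\<^sup>2 \<partial>M)"
  proof eventually_elim
    case (elim x)
    show ?case
      unfolding t s using assms(2,4,10-12) elim
      by (intro grid_invariant_le_expectation integrable_norm_diff_eval_tree_sq)
        (auto simp: finite_measure_axioms eval_tree_eq_if_threshold_equiv[OF t(2)]
          eval_tree_eq_if_threshold_equiv[OF s(2)])
  qed
qed

end
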